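(* In the setting of the lemma on the linear representation of the forward difference (i.e. $\alpha,\beta>0$, $g(n)=\sum_{i=0}^kc_in^i$ with $c_k\ne0$, and $A_0,A_1\in\mathbb{C}^{(k+2)\times(k+2)}$ the upper triangular matrices defined there), assume $k\ge1$ and let $C=A_0+A_1$. Then the joint spectral radius of $\{A_0,A_1\}$ equals $\max\{\alpha,\beta,2^{k-1}\}$, and the set of eigenvalues of $C$ is $\{\alpha+\beta,2^k,2^{k-1},\dots,2,1\}$. If $\max\{\alpha,\beta\}\ne2^{k-1}$, then $\{A_0,A_1\}$ has the simple growth property.
   Context: Here, with $d_0=(1-\beta)x(1)-g(1)+g(0)$, $d_1=g(1)-(1-\beta)x(1)$, $b_{0j}=\sum_{i=j+1}^k\binom ij2^jc_i$, $b_{1j}=\sum_{i=j+1}^k\binom ij(2^i-2^j)c_i$, $a_{0ij}=[j=i]2^i$, $a_{1ij}=\binom ij2^j$ ($0\le i,j<k$), $b_r=(b_{r(k-1)},\dots,b_{r0})$, $\widetilde A_r=(a_{rij})_{i,j=k-1,\dots,0}$, $\mu_0=\beta$, $\mu_1=\alpha$, one has $A_r=\begin{pmatrix}\mu_r&b_r&d_r\\0&\widetilde A_r&0\\0&0&[r=0]\end{pmatrix}$ for $r\in\{0,1\}$. Joint spectral radius of a finite set $G$ of square matrices: $\rho(G)=\lim_{k\to\infty}\sup\{\|G_1\cdots G_k\|^{1/k}:G_i\in G\}$ for an induced norm. $G$ has the simple growth property if $\|G_1\cdots G_k\|=O(\rho(G)^k)$ uniformly for $G_i\in G$ as $k\to\infty$.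 $[S]$ is the Iverson bracket. *)

theory Defs
  imports Complex_Main "Jordan_Normal_Form.Spectral_Radius"
begin

definition inf_norm :: "complex mat \<Rightarrow> real" where
  "inf_norm A = Max (insert 0 ((\<lambda>i. \<Sum>j<dim_col A. cmod (A $$ (i, j))) ` {..<dim_row A}))"

definition mat_list_prod :: "nat \<Rightarrow> complex mat list \<Rightarrow> complex mat" where
  "mat_list_prod d Gs = foldr (\<lambda>A B. A * B) Gs (1\<^sub>m d)"

definition jsr_seq :: "nat \<Rightarrow> complex mat set \<Rightarrow> nat \<Rightarrow> real" where
  "jsr_seq d G n = (SUP Gs \<in> {Gs. set Gs \<subseteq> G \<and> length Gs = n}. inf_norm (mat_list_prod d Gs) powr (1 / real n))"

definition joint_spectral_radius :: "nat \<Rightarrow> complex mat set \<Rightarrow> real" where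
  "joint_spectral_radius d G = lim (jsr_seq d G)"

definition simple_growth :: "nat \<Rightarrow> complex mat set \<Rightarrow> bool" where
  "simple_growth d G \<longleftrightarrow> (\<exists>C N. \<forall>n\<ge>N. \<forall>Gs. set Gs \<subseteq> G \<and> length Gs = n \<longrightarrow>
       inf_norm (mat_list_prod d Gs) \<le> C * joint_spectral_radius d G ^ n)"

(* Index 0 is the first row/column,
   index p (1 <= p <= k) corresponds to the index i = k - p of \<tilde>A_r
   (so the order is k-1, ..., 0), and index k+1 is the last row/column. *)
definition fd_matrix ::
  "nat \<Rightarrow> real \<Rightarrow> real \<Rightarrow> (nat \<Rightarrow> real) \<Rightarrow> real \<Rightarrow> nat \<Rightarrow> complex mat" where
  "fd_matrix k \<alpha> \<beta> c x1 r = mat (k + 2) (k + 2) (\<lambda>(p, q).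
     let g = (\<lambda>n::nat. \<Sum>i\<le>k. c i * real n ^ i);
         mu = (if r = 0 then \<beta> else \<alpha>);
         d = (if r = 0 then (1 - \<beta>) * x1 - g 1 + g 0 else g 1 - (1 - \<beta>) * x1);
         b = (\<lambda>j. if r = 0 then (\<Sum>i\<in>{j+1..k}. real (i choose j) * 2 ^ j * c i)
                    else (\<Sum>i\<in>{j+1..k}. real (i choose j) * (2 ^ i - 2 ^ j) * c i));
         a = (\<lambda>i j. if r = 0 then (if j = i then 2 ^ i else 0) else real (i choose j) * 2 ^ j)
     in complex_of_real
       (if p = 0 then (if q = 0 then mu else if q \<le> k then b (k - q) else d)
        else if p \<le> k then (if 1 \<le> q \<and> q \<le> k then a (k - p) (k - q) else 0)
        else (if q = k + 1 \<and> r = 0 then 1 else 0)))"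

end

theory Submission
  imports Defs
begin

text \<open>Both matrices are upper triangular with the same shape: the last row is zero off the
  diagonal, a middle row \<open>p\<close> has diagonal entry \<open>2^(k-p)\<close> and couples only to the middle rows
  below it, and the first row has diagonal entry \<open>\<beta>\<close> or \<open>\<alpha>\<close>. Peeling off the first factor of a
  product shows that, row by row from the bottom up, the entries of row \<open>p\<close> of products of
  length \<open>n\<close> are \<open>O(\<tau>^n)\<close> with \<open>\<tau>\<close> the larger of the diagonal entry and the rates of the rows it
  couples to, provided the two differ. This gives the upper bound \<open>O(\<tau>^n)\<close> for every
  \<open>\<tau> > max {\<alpha>, \<beta>, 2^(k-1)}\<close>, and for \<open>\<tau> = max {\<alpha>, \<beta>, 2^(k-1)}\<close> itself when
  \<open>max {\<alpha>, \<beta>} \<noteq> 2^(k-1)\<close> (simple growth). The matching lower bound comes from powers of a single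
  matrix, whose diagonal entries are the powers of the diagonal entries. Finally \<open>A\<^sub>0 + A\<^sub>1\<close> is
  upper triangular with diagonal \<open>\<alpha> + \<beta>, 2^k, \<dots>, 2, 1\<close>.\<close>

lemma mat_list_prod_Nil [simp]: "mat_list_prod n [] = 1\<^sub>m n"
  by (simp add: mat_list_prod_def)

lemma mat_list_prod_Cons [simp]: "mat_list_prod n (A # As) = A * mat_list_prod n As"
  by (simp add: mat_list_prod_def)

lemma mat_list_prod_carrier:
  "set As \<subseteq> carrier_mat n n \<Longrightarrow> mat_list_prod n As \<in> carrier_mat n n"
  by (induction As) auto

lemma index_mult_mat_sum:
  assumes "A \<in> carrier_mat n n" "B \<in> carrier_mat n n" "i < n" "j < n"
  shows "(A * B) $$ (i, j) = (\<Sum>s<n. A $$ (i, s) * B $$ (s, j))"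
  using assms by (simp add: scalar_prod_def lessThan_atLeast0 mult.commute)

lemma norm_index_mult_mat_le:
  assumes "A \<in> carrier_mat n n" "B \<in> carrier_mat n n" "i < n" "j < n"
  shows "cmod ((A * B) $$ (i, j)) \<le> cmod (A $$ (i, i)) * cmod (B $$ (i, j))
     + (\<Sum>s\<in>{..<n} - {i}. cmod (A $$ (i, s)) * cmod (B $$ (s, j)))"
proof -
  have "(A * B) $$ (i, j) = A $$ (i, i) * B $$ (i, j) + (\<Sum>s\<in>{..<n} - {i}. A $$ (i, s) * B $$ (s, j))"
    unfolding index_mult_mat_sum[OF assms] using assms(3) by (simp add: sum.remove)
  then show ?thesis
    by (metis (no_types, lifting) norm_triangle_le add_left_mono norm_mult norm_sum sum.cong)
qed

lemma upper_triangular_mult: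
  assumes A: "A \<in> carrier_mat n n" "upper_triangular A"
    and B: "B \<in> carrier_mat n n" "upper_triangular B"
  shows "upper_triangular (A * B)"
    and "i < n \<Longrightarrow> (A * B) $$ (i, i) = A $$ (i, i) * B $$ (i, i)"
proof -
  have vanish: "A $$ (i, s) * B $$ (s, j) = 0" if "i < n" "s < n" "s < i \<or> j < s" for i j s
  proof (cases "s < i")
    case True
    then show ?thesis using A that upper_triangularD[OF A(2) True] by simp
  next
    case False
    then show ?thesis using B that upper_triangularD[OF B(2), of j s] by simp
  qed
  show "upper_triangular (A * B)"
  proof
    fix i j assume "j < i" "i < dim_row (A * B)"
    then have "i < n" "j < n" using A by auto
    then show "(A * B) $$ (i, j) = 0"
      unfolding index_mult_mat_sum[OF A(1) B(1) \<open>i < n\<close> \<open>j < n\<close>]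
      using \<open>j < i\<close> by (intro sum.neutral ballI vanish) auto
  qed
  assume "i < n"
  have "(\<Sum>s\<in>{..<n} - {i}. A $$ (i, s) * B $$ (s, i)) = 0"
    using \<open>i < n\<close> by (intro sum.neutral ballI vanish) auto
  then show "(A * B) $$ (i, i) = A $$ (i, i) * B $$ (i, i)"
    unfolding index_mult_mat_sum[OF A(1) B(1) \<open>i < n\<close> \<open>i < n\<close>]
    using \<open>i < n\<close> by (simp add: sum.remove)
qed

lemma upper_triangular_mat_list_prod:
  assumes "set As \<subseteq> {A \<in> carrier_mat n n. upper_triangular A}"
  shows "upper_triangular (mat_list_prod n As)"
    and "i < n \<Longrightarrow> mat_list_prod n As $$ (i, i) = (\<Prod>A\<leftarrow>As. A $$ (i, i))"
proof -
  have "upper_triangular (mat_list_prod n As) \<and>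
      (\<forall>i<n. mat_list_prod n As $$ (i, i) = (\<Prod>A\<leftarrow>As. A $$ (i, i)))"
    using assms
  proof (induction As)
    case (Cons A As)
    then have "mat_list_prod n As \<in> carrier_mat n n"
      by (intro mat_list_prod_carrier) auto
    with Cons show ?case
      using upper_triangular_mult[of A n "mat_list_prod n As"] by auto
  qed auto
  then show "upper_triangular (mat_list_prod n As)"
    and "i < n \<Longrightarrow> mat_list_prod n As $$ (i, i) = (\<Prod>A\<leftarrow>As. A $$ (i, i))"
    by auto
qed

lemma inf_norm_nonneg: "0 \<le> inf_norm A"
  unfolding inf_norm_def by (rule Max_ge) auto

lemma norm_index_le_inf_norm:
  assumes "A \<in> carrier_mat n n" "i < n" "j < n"
  shows "cmod (A $$ (i, j)) \<le> inf_norm A"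
proof -
  have "cmod (A $$ (i, j)) \<le> (\<Sum>j<n. cmod (A $$ (i, j)))"
    by (rule member_le_sum) (use assms in auto)
  also have "\<dots> \<le> inf_norm A"
    unfolding inf_norm_def using assms by (intro Max_ge) auto
  finally show ?thesis .
qed

lemma geometric_recurrence_bound:
  fixes f :: "'a list \<Rightarrow> real" and \<mu> \<sigma> c :: real
  assumes "0 \<le> \<mu>" "0 \<le> \<sigma>" "\<mu> \<noteq> \<sigma>" "0 \<le> c" "f [] \<le> 1"
    and step: "\<And>x xs. x \<in> X \<Longrightarrow> set xs \<subseteq> X \<Longrightarrow> f (x # xs) \<le> \<mu> * f xs + c * \<sigma> ^ length xs"
    and xs: "set xs \<subseteq> X"
  shows "f xs \<le> (1 + c / \<bar>\<mu> - \<sigma>\<bar>) * max \<mu> \<sigma> ^ length xs"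
proof -
  let ?n = "length xs" and ?m = "max \<mu> \<sigma>"
  have explicit: "f xs \<le> \<mu> ^ ?n + c * ((\<mu> ^ ?n - \<sigma> ^ ?n) / (\<mu> - \<sigma>))"
    using xs
  proof (induction xs)
    case Nil
    then show ?case using \<open>f [] \<le> 1\<close> by simp
  next
    case (Cons x xs)
    let ?n = "length xs"
    have "f (x # xs) \<le> \<mu> * f xs + c * \<sigma> ^ ?n"
      using Cons.prems by (intro step) auto
    also have "\<dots> \<le> \<mu> * (\<mu> ^ ?n + c * ((\<mu> ^ ?n - \<sigma> ^ ?n) / (\<mu> - \<sigma>))) + c * \<sigma> ^ ?n"
      using Cons \<open>0 \<le> \<mu>\<close> by (intro add_right_mono mult_left_mono) auto
    also have "\<dots> = \<mu> ^ Suc ?n + c * ((\<mu> ^ Suc ?n - \<sigma> ^ Suc ?n) / (\<mu> - \<sigma>))"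
      using \<open>\<mu> \<noteq> \<sigma>\<close> by (simp add: field_simps)
    finally show ?case by simp
  qed
  have "0 \<le> \<mu> ^ ?n" "\<mu> ^ ?n \<le> ?m ^ ?n" "0 \<le> \<sigma> ^ ?n" "\<sigma> ^ ?n \<le> ?m ^ ?n"
    using assms(1,2) by (auto intro: power_mono)
  then have "\<bar>\<mu> ^ ?n - \<sigma> ^ ?n\<bar> \<le> ?m ^ ?n"
    by linarith
  then have "(\<mu> ^ ?n - \<sigma> ^ ?n) / (\<mu> - \<sigma>) \<le> ?m ^ ?n / \<bar>\<mu> - \<sigma>\<bar>"
  proof -
    have "(\<mu> ^ ?n - \<sigma> ^ ?n) / (\<mu> - \<sigma>) \<le> \<bar>\<mu> ^ ?n - \<sigma> ^ ?n\<bar> / \<bar>\<mu> - \<sigma>\<bar>"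
      by (metis abs_divide abs_ge_self)
    also have "\<dots> \<le> ?m ^ ?n / \<bar>\<mu> - \<sigma>\<bar>"
      using \<open>\<bar>\<mu> ^ ?n - \<sigma> ^ ?n\<bar> \<le> ?m ^ ?n\<close> by (rule divide_right_mono) simp
    finally show ?thesis .
  qed
  then have "c * ((\<mu> ^ ?n - \<sigma> ^ ?n) / (\<mu> - \<sigma>)) \<le> c / \<bar>\<mu> - \<sigma>\<bar> * ?m ^ ?n"
    using \<open>0 \<le> c\<close> by (metis mult_left_mono times_divide_eq_left times_divide_eq_right)
  then show ?thesis
    using explicit \<open>\<mu> ^ ?n \<le> ?m ^ ?n\<close> by (simp add: algebra_simps)
qed

definition row_growth :: "nat \<Rightarrow> complex mat set \<Rightarrow> nat \<Rightarrow> real \<Rightarrow> bool" where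
  "row_growth n G i \<tau> \<longleftrightarrow> (\<exists>K. \<forall>As j. set As \<subseteq> G \<longrightarrow> j < n \<longrightarrow>
      cmod (mat_list_prod n As $$ (i, j)) \<le> K * \<tau> ^ length As)"

lemma row_growth_mono:
  assumes "row_growth n G i \<tau>" "0 \<le> \<tau>" "\<tau> \<le> \<tau>'"
  shows "row_growth n G i \<tau>'"
proof -
  obtain K where K: "\<And>As j. set As \<subseteq> G \<Longrightarrow> j < n \<Longrightarrow>
      cmod (mat_list_prod n As $$ (i, j)) \<le> K * \<tau> ^ length As"
    using assms(1) unfolding row_growth_def by blast
  have "K * \<tau> ^ m \<le> \<bar>K\<bar> * \<tau>' ^ m" for m
  proof -
    have "K * \<tau> ^ m \<le> \<bar>K\<bar> * \<tau> ^ m"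
      using assms(2) by (intro mult_right_mono) auto
    also have "\<dots> \<le> \<bar>K\<bar> * \<tau>' ^ m"
      using assms(2,3) by (intro mult_left_mono power_mono) auto
    finally show ?thesis .
  qed
  then show ?thesis
    unfolding row_growth_def using K by (blast intro: order_trans)
qed

lemma row_growth_uniform:
  assumes "finite I" "0 \<le> \<tau>" "\<And>i. i \<in> I \<Longrightarrow> row_growth n G i \<tau>"
  obtains K where "0 < K" "\<And>i As j. i \<in> I \<Longrightarrow> set As \<subseteq> G \<Longrightarrow> j < n \<Longrightarrow>
      cmod (mat_list_prod n As $$ (i, j)) \<le> K * \<tau> ^ length As"
proof -
  have "\<exists>K>0. \<forall>i\<in>I. \<forall>As j. set As \<subseteq> G \<longrightarrow> j < n \<longrightarrow>
      cmod (mat_list_prod n As $$ (i, j)) \<le> K * \<tau> ^ length As"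
    using assms(1,3)
  proof (induction I rule: finite_induct)
    case empty
    show ?case by (intro exI[of _ 1]) auto
  next
    case (insert i I)
    then obtain K where "0 < K" and K: "\<And>i' As j. i' \<in> I \<Longrightarrow> set As \<subseteq> G \<Longrightarrow> j < n \<Longrightarrow>
        cmod (mat_list_prod n As $$ (i', j)) \<le> K * \<tau> ^ length As"
      by blast
    obtain K' where K': "\<And>As j. set As \<subseteq> G \<Longrightarrow> j < n \<Longrightarrow>
        cmod (mat_list_prod n As $$ (i, j)) \<le> K' * \<tau> ^ length As"
      using insert.prems unfolding row_growth_def by blast
    have bound: "K * \<tau> ^ m \<le> max K \<bar>K'\<bar> * \<tau> ^ m" "K' * \<tau> ^ m \<le> max K \<bar>K'\<bar> * \<tau> ^ m" for m
      using \<open>0 \<le> \<tau>\<close> by (auto intro!: mult_right_mono)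
    show ?case
    proof (intro exI[of _ "max K \<bar>K'\<bar>"] conjI ballI allI impI)
      show "0 < max K \<bar>K'\<bar>"
        using \<open>0 < K\<close> by simp
      fix i' As j assume "i' \<in> insert i I" "set As \<subseteq> G" "j < n"
      then consider "i' = i" | "i' \<in> I" by blast
      then show "cmod (mat_list_prod n As $$ (i', j)) \<le> max K \<bar>K'\<bar> * \<tau> ^ length As"
      proof cases
        case 1
        then show ?thesis
          using order_trans[OF K'[OF \<open>set As \<subseteq> G\<close> \<open>j < n\<close>] bound(2)] by simp
      next
        case 2
        then show ?thesis
          using order_trans[OF K[OF 2 \<open>set As \<subseteq> G\<close> \<open>j < n\<close>] bound(1)] by simp
      qed
    qed
  qed
  then show ?thesis
    using that by blast
qed

lemma off_diagonal_row_sum_growth: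
  assumes G: "finite G" and "0 \<le> \<sigma>"
    and off_diag: "\<And>s. s < n \<Longrightarrow> s \<noteq> i \<Longrightarrow> (\<forall>A\<in>G. A $$ (i, s) = 0) \<or> row_growth n G s \<sigma>"
  obtains c where "0 \<le> c" "\<And>A As j. A \<in> G \<Longrightarrow> set As \<subseteq> G \<Longrightarrow> j < n \<Longrightarrow>
    (\<Sum>s\<in>{..<n} - {i}. cmod (A $$ (i, s)) * cmod (mat_list_prod n As $$ (s, j))) \<le> c * \<sigma> ^ length As"
proof -
  define S where "S = {s. s < n \<and> s \<noteq> i \<and> (\<exists>A\<in>G. A $$ (i, s) \<noteq> 0)}"
  obtain K where "0 < K" and K: "\<And>s As j. s \<in> S \<Longrightarrow> set As \<subseteq> G \<Longrightarrow> j < n \<Longrightarrow>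
      cmod (mat_list_prod n As $$ (s, j)) \<le> K * \<sigma> ^ length As"
    by (rule row_growth_uniform[of S \<sigma> n G]) (use off_diag \<open>0 \<le> \<sigma>\<close> in \<open>auto simp: S_def\<close>)
  define M where "M = Max (insert 0 ((\<lambda>(A, s). cmod (A $$ (i, s))) ` (G \<times> {..<n})))"
  have "0 \<le> M" and M: "\<And>A s. A \<in> G \<Longrightarrow> s < n \<Longrightarrow> cmod (A $$ (i, s)) \<le> M"
    unfolding M_def using G by (auto intro!: Max_ge)
  have "(\<Sum>s\<in>{..<n} - {i}. cmod (A $$ (i, s)) * cmod (mat_list_prod n As $$ (s, j)))
      \<le> (real n * M * K) * \<sigma> ^ length As" if "A \<in> G" "set As \<subseteq> G" "j < n" for A As j
  proof -
    have "cmod (A $$ (i, s)) * cmod (mat_list_prod n As $$ (s, j)) \<le> M * (K * \<sigma> ^ length As)"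
      if "s \<in> {..<n} - {i}" for s
    proof (cases "s \<in> S")
      case True
      then show ?thesis
        using M K \<open>A \<in> G\<close> \<open>set As \<subseteq> G\<close> \<open>j < n\<close> \<open>0 \<le> M\<close> that by (auto intro!: mult_mono)
    next
      case False
      then show ?thesis
        using that \<open>A \<in> G\<close> \<open>0 \<le> M\<close> \<open>0 < K\<close> \<open>0 \<le> \<sigma>\<close> by (auto simp: S_def)
    qed
    then have "(\<Sum>s\<in>{..<n} - {i}. cmod (A $$ (i, s)) * cmod (mat_list_prod n As $$ (s, j)))
        \<le> (\<Sum>s\<in>{..<n} - {i}. M * (K * \<sigma> ^ length As))"
      by (rule sum_mono)
    also have "\<dots> = real (card ({..<n} - {i})) * (M * (K * \<sigma> ^ length As))"
      by simp
    also have "\<dots> \<le> real n * (M * (K * \<sigma> ^ length As))"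
      using card_Diff1_le[of "{..<n}" i] \<open>0 \<le> M\<close> \<open>0 < K\<close> \<open>0 \<le> \<sigma>\<close>
      by (intro mult_right_mono) auto
    finally show ?thesis
      by (simp add: mult.assoc)
  qed
  moreover have "0 \<le> real n * M * K"
    using \<open>0 \<le> M\<close> \<open>0 < K\<close> by simp
  ultimately show ?thesis
    using that by blast
qed

lemma row_growth_step:
  assumes G: "G \<subseteq> carrier_mat n n" "finite G" and "i < n"
    and diag: "\<And>A. A \<in> G \<Longrightarrow> cmod (A $$ (i, i)) \<le> \<mu>"
    and "0 \<le> \<mu>" "0 \<le> \<sigma>" "\<mu> \<noteq> \<sigma>"
    and off_diag: "\<And>s. s < n \<Longrightarrow> s \<noteq> i \<Longrightarrow> (\<forall>A\<in>G. A $$ (i, s) = 0) \<or> row_growth n G s \<sigma>"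
  shows "row_growth n G i (max \<mu> \<sigma>)"
proof -
  obtain c where "0 \<le> c" and off_diag_bound: "\<And>A As j. A \<in> G \<Longrightarrow> set As \<subseteq> G \<Longrightarrow> j < n \<Longrightarrow>
      (\<Sum>s\<in>{..<n} - {i}. cmod (A $$ (i, s)) * cmod (mat_list_prod n As $$ (s, j))) \<le> c * \<sigma> ^ length As"
    using off_diagonal_row_sum_growth[OF G(2) \<open>0 \<le> \<sigma>\<close> off_diag] by blast
  have "cmod (mat_list_prod n As $$ (i, j)) \<le> (1 + c / \<bar>\<mu> - \<sigma>\<bar>) * max \<mu> \<sigma> ^ length As"
    if "set As \<subseteq> G" "j < n" for As j
  proof (rule geometric_recurrence_bound[where f = "\<lambda>As. cmod (mat_list_prod n As $$ (i, j))"])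
    fix A As assume "A \<in> G" "set As \<subseteq> G"
    then have "mat_list_prod n As \<in> carrier_mat n n"
      using G by (intro mat_list_prod_carrier) auto
    then have "cmod (mat_list_prod n (A # As) $$ (i, j))
        \<le> cmod (A $$ (i, i)) * cmod (mat_list_prod n As $$ (i, j))
          + (\<Sum>s\<in>{..<n} - {i}. cmod (A $$ (i, s)) * cmod (mat_list_prod n As $$ (s, j)))"
      using norm_index_mult_mat_le[of A n _ i j] \<open>A \<in> G\<close> G(1) \<open>i < n\<close> \<open>j < n\<close> by auto
    also have "\<dots> \<le> \<mu> * cmod (mat_list_prod n As $$ (i, j)) + c * \<sigma> ^ length As"
      using \<open>A \<in> G\<close> \<open>set As \<subseteq> G\<close> \<open>j < n\<close>
      by (intro add_mono mult_right_mono diag off_diag_bound) auto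
    finally show "cmod (mat_list_prod n (A # As) $$ (i, j))
        \<le> \<mu> * cmod (mat_list_prod n As $$ (i, j)) + c * \<sigma> ^ length As" .
  qed (use that \<open>i < n\<close> \<open>0 \<le> \<mu>\<close> \<open>0 \<le> \<sigma>\<close> \<open>\<mu> \<noteq> \<sigma>\<close> \<open>0 \<le> c\<close> in auto)
  then show ?thesis
    unfolding row_growth_def by blast
qed

lemma inf_norm_growth:
  assumes "G \<subseteq> carrier_mat n n" "\<And>i. i < n \<Longrightarrow> row_growth n G i \<tau>" "0 \<le> \<tau>"
  obtains K where "0 < K" "\<And>As. set As \<subseteq> G \<Longrightarrow> inf_norm (mat_list_prod n As) \<le> K * \<tau> ^ length As"
proof -
  obtain K where "0 < K" and K: "\<And>i As j. i < n \<Longrightarrow> set As \<subseteq> G \<Longrightarrow> j < n \<Longrightarrow>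
      cmod (mat_list_prod n As $$ (i, j)) \<le> K * \<tau> ^ length As"
    by (rule row_growth_uniform[of "{..<n}" \<tau> n G]) (use assms(2,3) in auto)
  have "inf_norm (mat_list_prod n As) \<le> (real n * K + 1) * \<tau> ^ length As" if "set As \<subseteq> G" for As
  proof -
    have "(\<Sum>j<n. cmod (mat_list_prod n As $$ (i, j))) \<le> (real n * K + 1) * \<tau> ^ length As"
      if "i < n" for i
    proof -
      have "(\<Sum>j<n. cmod (mat_list_prod n As $$ (i, j))) \<le> (\<Sum>j<n. K * \<tau> ^ length As)"
        using K \<open>i < n\<close> \<open>set As \<subseteq> G\<close> by (intro sum_mono) auto
      also have "\<dots> \<le> (real n * K + 1) * \<tau> ^ length As"
        using \<open>0 \<le> \<tau>\<close> by (simp add: algebra_simps)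
      finally show ?thesis .
    qed
    moreover have "0 \<le> (real n * K + 1) * \<tau> ^ length As"
      using \<open>0 < K\<close> \<open>0 \<le> \<tau>\<close> by simp
    moreover have "mat_list_prod n As \<in> carrier_mat n n"
      using assms(1) \<open>set As \<subseteq> G\<close> by (intro mat_list_prod_carrier) auto
    ultimately show ?thesis
      unfolding inf_norm_def by (auto simp: Max_le_iff)
  qed
  moreover have "0 < real n * K + 1"
    using \<open>0 < K\<close> by (simp add: add_nonneg_pos)
  ultimately show ?thesis
    using that by blast
qed

lemma power_powr_inverse: "0 \<le> t \<Longrightarrow> 1 \<le> m \<Longrightarrow> (t ^ m) powr (1 / real m) = (t::real)"
  by (cases "t = 0") (simp_all add: powr_realpow[symmetric] powr_powr)

lemma bdd_above_jsr_terms: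
  assumes "\<And>As. set As \<subseteq> G \<Longrightarrow> inf_norm (mat_list_prod n As) \<le> K * \<tau> ^ length As"
  shows "bdd_above ((\<lambda>As. inf_norm (mat_list_prod n As) powr (1 / real m)) `
    {As. set As \<subseteq> G \<and> length As = m})"
  by (rule bdd_aboveI2[where M = "(K * \<tau> ^ m) powr (1 / real m)"])
    (auto intro!: powr_mono2 inf_norm_nonneg assms)

lemma jsr_seq_le:
  assumes "G \<noteq> {}" "0 < K" "0 < \<tau>" "1 \<le> m"
    and "\<And>As. set As \<subseteq> G \<Longrightarrow> inf_norm (mat_list_prod n As) \<le> K * \<tau> ^ length As"
  shows "jsr_seq n G m \<le> K powr (1 / real m) * \<tau>"
  unfolding jsr_seq_def
proof (rule cSUP_least)
  obtain A where "A \<in> G"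
    using assms(1) by blast
  then have "replicate m A \<in> {As. set As \<subseteq> G \<and> length As = m}"
    by auto
  then show "{As. set As \<subseteq> G \<and> length As = m} \<noteq> {}"
    by blast
next
  fix As assume "As \<in> {As. set As \<subseteq> G \<and> length As = m}"
  then have "inf_norm (mat_list_prod n As) powr (1 / real m) \<le> (K * \<tau> ^ m) powr (1 / real m)"
    by (auto intro!: powr_mono2 inf_norm_nonneg assms(5))
  also have "\<dots> = K powr (1 / real m) * \<tau>"
    using assms(2-4) by (simp add: powr_mult power_powr_inverse)
  finally show "inf_norm (mat_list_prod n As) powr (1 / real m) \<le> K powr (1 / real m) * \<tau>" .
qed

lemma jsr_seq_ge_diag:
  assumes "G \<subseteq> carrier_mat n n" "A \<in> G" "upper_triangular A" "i < n" "1 \<le> m"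
    and "bdd_above ((\<lambda>As. inf_norm (mat_list_prod n As) powr (1 / real m)) `
      {As. set As \<subseteq> G \<and> length As = m})"
  shows "cmod (A $$ (i, i)) \<le> jsr_seq n G m"
proof -
  let ?As = "replicate m A"
  have "set ?As \<subseteq> {A \<in> carrier_mat n n. upper_triangular A}"
    using assms(1-3) by auto
  then have "mat_list_prod n ?As $$ (i, i) = A $$ (i, i) ^ m"
    using upper_triangular_mat_list_prod(2) assms(4) by (simp add: prod_list_replicate)
  moreover have "mat_list_prod n ?As \<in> carrier_mat n n"
    using assms(1,2) by (intro mat_list_prod_carrier) auto
  ultimately have "cmod (A $$ (i, i)) ^ m \<le> inf_norm (mat_list_prod n ?As)"
    using norm_index_le_inf_norm[of "mat_list_prod n ?As" n i i] assms(4) by (simp add: norm_power)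
  then have "(cmod (A $$ (i, i)) ^ m) powr (1 / real m) \<le> inf_norm (mat_list_prod n ?As) powr (1 / real m)"
    by (intro powr_mono2) auto
  also have "\<dots> \<le> jsr_seq n G m"
    unfolding jsr_seq_def by (rule cSUP_upper) (use assms(2,6) in auto)
  finally show ?thesis
    using assms(5) by (simp add: power_powr_inverse)
qed

lemma tendsto_of_root_bounds:
  fixes u :: "nat \<Rightarrow> real"
  assumes lower: "\<And>m. 1 \<le> m \<Longrightarrow> \<rho> \<le> u m"
    and upper: "\<And>\<tau>. \<rho> < \<tau> \<Longrightarrow> \<exists>K>0. \<forall>m\<ge>1. u m \<le> K powr (1 / real m) * \<tau>"
  shows "u \<longlonglongrightarrow> \<rho>"
proof (rule order_tendstoI)
  fix y assume "y < \<rho>"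
  then show "\<forall>\<^sub>F m in sequentially. y < u m"
    using lower by (auto simp: eventually_sequentially intro: less_le_trans)
next
  fix y assume "\<rho> < y"
  define \<tau> where "\<tau> = (\<rho> + y) / 2"
  have "\<rho> < \<tau>" "\<tau> < y"
    using \<open>\<rho> < y\<close> by (auto simp: \<tau>_def)
  then obtain K where "0 < K" and K: "\<And>m. 1 \<le> m \<Longrightarrow> u m \<le> K powr (1 / real m) * \<tau>"
    using upper by blast
  have "(\<lambda>m. K powr (1 / real m) * \<tau>) \<longlonglongrightarrow> K powr 0 * \<tau>"
    by (intro tendsto_intros tendsto_powr lim_inverse_n') (use \<open>0 < K\<close> in auto)
  then have "\<forall>\<^sub>F m in sequentially. K powr (1 / real m) * \<tau> < y"
    using \<open>\<tau> < y\<close> \<open>0 < K\<close> by (intro order_tendstoD(2)) auto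
  then show "\<forall>\<^sub>F m in sequentially. u m < y"
    using eventually_ge_at_top[of 1] by eventually_elim (use K in fastforce)
qed

lemma upper_triangular_add:
  fixes A B :: "'a::monoid_add mat"
  assumes "A \<in> carrier_mat n n" "upper_triangular A" "B \<in> carrier_mat n n" "upper_triangular B"
  shows "upper_triangular (A + B)"
proof
  fix i j assume "j < i" "i < dim_row (A + B)"
  then show "(A + B) $$ (i, j) = 0"
    using assms upper_triangularD[OF assms(2)] upper_triangularD[OF assms(4)] by auto
qed

lemma spectrum_upper_triangular:
  fixes A :: "'a::field mat"
  assumes "A \<in> carrier_mat n n" "upper_triangular A"
  shows "spectrum A = (\<lambda>i. A $$ (i, i)) ` {..<n}"
proof -
  have "spectrum A = {x. poly (char_poly A) x = 0}"
    by (rule spectrum_root_char_poly[OF assms(1)])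
  also have "\<dots> = set (diag_mat A)"
    unfolding char_poly_upper_triangular[OF assms] poly_prod_list_zero_iff by auto
  also have "\<dots> = (\<lambda>i. A $$ (i, i)) ` {..<n}"
    using assms(1) by (auto simp: diag_mat_def)
  finally show ?thesis .
qed

lemma fd_matrix_carrier: "fd_matrix k a b c x1 r \<in> carrier_mat (k + 2) (k + 2)"
  by (simp add: fd_matrix_def)

lemma fd_matrix_top_left: "fd_matrix k a b c x1 r $$ (0, 0) = complex_of_real (if r = 0 then b else a)"
  by (simp add: fd_matrix_def Let_def)

lemma fd_matrix_bottom_row:
  "q < k + 2 \<Longrightarrow> fd_matrix k a b c x1 r $$ (k + 1, q) = (if q = k + 1 \<and> r = 0 then 1 else 0)"
  by (simp add: fd_matrix_def Let_def)

lemma fd_matrix_middle_zero: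
  assumes "1 \<le> p" "p \<le> k" "q < k + 2" "q < p \<or> q = 0 \<or> q = k + 1"
  shows "fd_matrix k a b c x1 r $$ (p, q) = 0"
  using assms by (auto simp: fd_matrix_def Let_def binomial_eq_0)

lemma fd_matrix_middle_diag:
  assumes "1 \<le> p" "p \<le> k"
  shows "fd_matrix k a b c x1 r $$ (p, p) = 2 ^ (k - p)"
  using assms by (simp add: fd_matrix_def Let_def)

lemma upper_triangular_fd_matrix: "upper_triangular (fd_matrix k a b c x1 r)"
proof
  fix i j assume "j < i" "i < dim_row (fd_matrix k a b c x1 r)"
  then have "i < k + 2"
    by (simp add: fd_matrix_def)
  then show "fd_matrix k a b c x1 r $$ (i, j) = 0"
    using fd_matrix_bottom_row[of j k] fd_matrix_middle_zero[of i k j] \<open>j < i\<close>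
    by (cases "i = k + 1") auto
qed

lemma spectrum_fd_matrix_sum:
  "spectrum (fd_matrix k a b c x1 0 + fd_matrix k a b c x1 1) =
    {complex_of_real (a + b)} \<union> {2 ^ i | i. i \<le> k}"
proof -
  let ?A0 = "fd_matrix k a b c x1 0" and ?A1 = "fd_matrix k a b c x1 1"
  let ?C = "?A0 + ?A1"
  have C: "?C \<in> carrier_mat (k + 2) (k + 2)"
    by (intro add_carrier_mat fd_matrix_carrier)
  have "upper_triangular ?C"
    by (intro upper_triangular_add[of _ "k + 2"] fd_matrix_carrier upper_triangular_fd_matrix)
  then have "spectrum ?C = (\<lambda>i. ?C $$ (i, i)) ` {..<k + 2}"
    by (rule spectrum_upper_triangular[OF C])
  also have "{..<k + 2} = insert 0 (insert (k + 1) {1..k})"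
    by auto
  also have "(\<lambda>i. ?C $$ (i, i)) ` insert 0 (insert (k + 1) {1..k}) =
      insert (complex_of_real (a + b)) (insert 1 ((\<lambda>i. 2 ^ i) ` (\<lambda>i. Suc (k - i)) ` {1..k}))"
  proof -
    have entry: "?C $$ (i, i) = ?A0 $$ (i, i) + ?A1 $$ (i, i)" if "i < k + 2" for i
      using that fd_matrix_carrier[of k a b c x1 1] by simp
    have "(\<lambda>i. ?C $$ (i, i)) ` {1..k} = (\<lambda>i. 2 ^ i) ` (\<lambda>i. Suc (k - i)) ` {1..k}"
      unfolding image_image
      by (rule image_cong) (use entry fd_matrix_middle_diag[of _ k] in auto)
    then show ?thesis
      using entry[of 0] entry[of "k + 1"] fd_matrix_bottom_row[of "k + 1" k a b c x1]
      by (simp add: fd_matrix_top_left add.commute)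
  qed
  also have "(\<lambda>i. Suc (k - i)) ` {1..k} = {1..k}"
  proof (intro equalityI subsetI)
    fix j assume "j \<in> {1..k}"
    then have "j = Suc (k - (Suc k - j))" "Suc k - j \<in> {1..k}"
      by auto
    then show "j \<in> (\<lambda>i. Suc (k - i)) ` {1..k}"
      by blast
  qed auto
  also have "insert 1 ((\<lambda>i. 2 ^ i) ` {1..k}) = (\<lambda>i. 2 ^ i :: complex) ` {..k}"
  proof -
    have "{..k} = insert 0 {1..k}"
      by auto
    then show ?thesis
      by simp
  qed
  also have "\<dots> = {2 ^ i | i. i \<le> k}"
    by blast
  finally show ?thesis
    by simp
qed

context
  fixes k :: nat and a b x1 :: real and c :: "nat \<Rightarrow> real"
begin

abbreviation fd_pair :: "complex mat set" where
  "fd_pair \<equiv> {fd_matrix k a b c x1 0, fd_matrix k a b c x1 1}"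

lemma fd_pair_carrier: "fd_pair \<subseteq> carrier_mat (k + 2) (k + 2)"
  using fd_matrix_carrier by blast

lemma row_growth_fd_bottom: "row_growth (k + 2) fd_pair (k + 1) 1"
proof -
  have "row_growth (k + 2) fd_pair (k + 1) (max 1 0)"
  proof (rule row_growth_step[OF fd_pair_carrier])
    fix A assume "A \<in> fd_pair"
    then show "cmod (A $$ (k + 1, k + 1)) \<le> 1"
      using fd_matrix_bottom_row[of "k + 1" k] by auto
  next
    fix s assume "s < k + 2" "s \<noteq> k + 1"
    then show "(\<forall>A\<in>fd_pair. A $$ (k + 1, s) = 0) \<or> row_growth (k + 2) fd_pair s 0"
      using fd_matrix_bottom_row[of s k] by auto
  qed auto
  then show ?thesis
    by simp
qed

lemma row_growth_fd_middle: "1 \<le> p \<Longrightarrow> p \<le> k \<Longrightarrow> row_growth (k + 2) fd_pair p (2 ^ (k - p))"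
proof (induction "k - p" arbitrary: p rule: less_induct)
  case less
  have "row_growth (k + 2) fd_pair p (max (2 ^ (k - p)) (2 ^ (k - p) / 2))"
  proof (rule row_growth_step[OF fd_pair_carrier])
    fix s assume "s < k + 2" "s \<noteq> p"
    show "(\<forall>A\<in>fd_pair. A $$ (p, s) = 0) \<or> row_growth (k + 2) fd_pair s (2 ^ (k - p) / 2)"
    proof (cases "s < p \<or> s = 0 \<or> s = k + 1")
      case True
      then show ?thesis
        using fd_matrix_middle_zero[of p k s] less.prems \<open>s < k + 2\<close> by auto
    next
      case False
      then have "p < s" "s \<le> k"
        using \<open>s < k + 2\<close> \<open>s \<noteq> p\<close> by auto
      then have "row_growth (k + 2) fd_pair s (2 ^ (k - s))"
        using less.prems by (intro less.hyps) auto
      moreover have "(2::real) ^ (k - s) \<le> 2 ^ (k - p) / 2"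
      proof -
        have "(2::real) ^ (k - s) \<le> 2 ^ (k - p - 1)"
          using \<open>p < s\<close> by (intro power_increasing) auto
        also have "\<dots> = 2 ^ (k - p) / 2"
          using \<open>p < s\<close> \<open>s \<le> k\<close> by (simp add: power_diff)
        finally show ?thesis .
      qed
      ultimately show ?thesis
        by (auto intro: row_growth_mono)
    qed
  qed (use less.prems in \<open>auto simp: fd_matrix_middle_diag norm_power\<close>)
  then show ?case
    by simp
qed

lemma row_growth_fd_top:
  assumes "0 < a" "0 < b" "2 ^ (k - 1) \<le> \<sigma>" "max a b \<noteq> \<sigma>"
  shows "row_growth (k + 2) fd_pair 0 (max (max a b) \<sigma>)"
proof (rule row_growth_step[OF fd_pair_carrier])
  fix s assume "s < k + 2" "s \<noteq> 0"
  then consider "s = k + 1" | "1 \<le> s" "s \<le> k"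
    by linarith
  then show "(\<forall>A\<in>fd_pair. A $$ (0, s) = 0) \<or> row_growth (k + 2) fd_pair s \<sigma>"
  proof cases
    case 1
    have "(1::real) \<le> \<sigma>"
      using assms(3) one_le_power[of "2::real" "k - 1"] by linarith
    then show ?thesis
      using row_growth_mono[OF row_growth_fd_bottom] 1 by auto
  next
    case 2
    then have "(2::real) ^ (k - s) \<le> 2 ^ (k - 1)"
      by (intro power_increasing) auto
    then have "(2::real) ^ (k - s) \<le> \<sigma>"
      using assms(3) by linarith
    then show ?thesis
      using row_growth_mono[OF row_growth_fd_middle[OF 2]] by auto
  qed
next
  show "0 \<le> \<sigma>"
    using assms(3) zero_le_power[of "2::real" "k - 1"] by linarith
qed (use assms in \<open>auto simp: fd_matrix_top_left\<close>)

lemma fd_pair_norm_bound: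
  assumes "0 < a" "0 < b" "2 ^ (k - 1) \<le> \<sigma>" "max a b \<noteq> \<sigma>"
  obtains K where "0 < K"
    "\<And>As. set As \<subseteq> fd_pair \<Longrightarrow> inf_norm (mat_list_prod (k + 2) As) \<le> K * max (max a b) \<sigma> ^ length As"
proof (rule inf_norm_growth[OF fd_pair_carrier])
  have one: "(1::real) \<le> max (max a b) \<sigma>"
    using assms(3) one_le_power[of "2::real" "k - 1"] by linarith
  then show "0 \<le> max (max a b) \<sigma>"
    by linarith
  fix p assume "p < k + 2"
  then consider "p = 0" | "p = k + 1" | "1 \<le> p" "p \<le> k"
    by linarith
  then show "row_growth (k + 2) fd_pair p (max (max a b) \<sigma>)"
  proof cases
    case 1
    then show ?thesis
      using row_growth_fd_top[OF assms] by simp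
  next
    case 2
    then show ?thesis
      using row_growth_mono[OF row_growth_fd_bottom _ one] by simp
  next
    case 3
    then have "(2::real) ^ (k - p) \<le> 2 ^ (k - 1)"
      by (intro power_increasing) auto
    then have "(2::real) ^ (k - p) \<le> max (max a b) \<sigma>"
      using assms(3) by linarith
    then show ?thesis
      using row_growth_mono[OF row_growth_fd_middle[OF 3]] by auto
  qed
qed (rule that)

lemma jsr_seq_fd_pair_tendsto:
  assumes "0 < a" "0 < b" "1 \<le> k"
  shows "jsr_seq (k + 2) fd_pair \<longlonglongrightarrow> max (max a b) (2 ^ (k - 1))"
proof (rule tendsto_of_root_bounds)
  let ?\<rho> = "max (max a b) (2 ^ (k - 1)) :: real"
  fix m :: nat assume "1 \<le> m"
  obtain K where "\<And>As. set As \<subseteq> fd_pair \<Longrightarrow>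
      inf_norm (mat_list_prod (k + 2) As) \<le> K * max (max a b) (?\<rho> + 1) ^ length As"
    by (rule fd_pair_norm_bound[OF assms(1,2), of "?\<rho> + 1"]) auto
  then have bdd: "bdd_above ((\<lambda>As. inf_norm (mat_list_prod (k + 2) As) powr (1 / real m)) `
      {As. set As \<subseteq> fd_pair \<and> length As = m})"
    by (rule bdd_above_jsr_terms)
  have diag_le: "cmod (A $$ (i, i)) \<le> jsr_seq (k + 2) fd_pair m" if "A \<in> fd_pair" "i < k + 2" for A i
    using that upper_triangular_fd_matrix
    by (intro jsr_seq_ge_diag[OF fd_pair_carrier _ _ _ \<open>1 \<le> m\<close> bdd]) auto
  have "a \<le> jsr_seq (k + 2) fd_pair m"
    using diag_le[of "fd_matrix k a b c x1 1" 0] assms(1) by (simp add: fd_matrix_top_left)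
  moreover have "b \<le> jsr_seq (k + 2) fd_pair m"
    using diag_le[of "fd_matrix k a b c x1 0" 0] assms(2) by (simp add: fd_matrix_top_left)
  moreover have "2 ^ (k - 1) \<le> jsr_seq (k + 2) fd_pair m"
    using diag_le[of "fd_matrix k a b c x1 0" 1] assms(3)
    by (simp add: fd_matrix_middle_diag norm_power)
  ultimately show "?\<rho> \<le> jsr_seq (k + 2) fd_pair m"
    by simp
next
  fix \<tau> assume \<tau>: "max (max a b) (2 ^ (k - 1)) < \<tau>"
  obtain K where "0 < K" and K: "\<And>As. set As \<subseteq> fd_pair \<Longrightarrow>
      inf_norm (mat_list_prod (k + 2) As) \<le> K * max (max a b) \<tau> ^ length As"
    by (rule fd_pair_norm_bound[OF assms(1,2), of \<tau>]) (use \<tau> in auto)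
  have "max (max a b) \<tau> = \<tau>" "0 < \<tau>"
    using \<tau> assms(1) by auto
  then show "\<exists>K>0. \<forall>m\<ge>1. jsr_seq (k + 2) fd_pair m \<le> K powr (1 / real m) * \<tau>"
    using K \<open>0 < K\<close> by (intro exI[of _ K] conjI allI impI jsr_seq_le) auto
qed

end

theorem mainTheorem8:
  fixes \<alpha> \<beta> x1 :: real and c :: "nat \<Rightarrow> real" and k :: nat
  assumes "\<alpha> > 0" and "\<beta> > 0" and "c k \<noteq> 0" and "k \<ge> 1"
  defines "A0 \<equiv> fd_matrix k \<alpha> \<beta> c x1 0"
      and "A1 \<equiv> fd_matrix k \<alpha> \<beta> c x1 1"
  shows "jsr_seq (k + 2) {A0, A1} \<longlonglongrightarrow> max (max \<alpha> \<beta>) (2 ^ (k - 1)) \<and>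
         joint_spectral_radius (k + 2) {A0, A1} = max (max \<alpha> \<beta>) (2 ^ (k - 1)) \<and>
         spectrum (A0 + A1) = {complex_of_real (\<alpha> + \<beta>)} \<union> {2 ^ i | i. i \<le> k} \<and>
         (max \<alpha> \<beta> \<noteq> 2 ^ (k - 1) \<longrightarrow> simple_growth (k + 2) {A0, A1})"
proof (intro conjI impI)
  show "jsr_seq (k + 2) {A0, A1} \<longlonglongrightarrow> max (max \<alpha> \<beta>) (2 ^ (k - 1))"
    unfolding A0_def A1_def using jsr_seq_fd_pair_tendsto assms(1,2,4) .
  then show jsr: "joint_spectral_radius (k + 2) {A0, A1} = max (max \<alpha> \<beta>) (2 ^ (k - 1))"
    unfolding joint_spectral_radius_def by (rule limI)
  show "spectrum (A0 + A1) = {complex_of_real (\<alpha> + \<beta>)} \<union> {2 ^ i | i. i \<le> k}"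
    unfolding A0_def A1_def by (rule spectrum_fd_matrix_sum)
  assume "max \<alpha> \<beta> \<noteq> 2 ^ (k - 1)"
  then obtain K where "\<And>As. set As \<subseteq> {A0, A1} \<Longrightarrow>
      inf_norm (mat_list_prod (k + 2) As) \<le> K * max (max \<alpha> \<beta>) (2 ^ (k - 1)) ^ length As"
    unfolding A0_def A1_def
    by (rule fd_pair_norm_bound[where ?x1.0 = x1 and c = c, OF assms(1,2) order_refl]) blast
  then show "simple_growth (k + 2) {A0, A1}"
    unfolding simple_growth_def jsr by blast
qed

end
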